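(* Let $L$ be a PG-lattice and $M$ a faithful multiplication PG-lattice $L$-module with $I_M$ compact, and let $\delta_1(A)=(\sqrt{(A:I_M)})I_M$. If $N\in M$ is proper, then $\sqrt{(N:K)}\,K\leqslant\delta_1(N)$ for every proper element $K\in M$ with $K\not\leqslant N$.
   Context: $L$ is a multiplicative lattice (complete lattice with commutative, associative multiplication distributing over arbitrary joins, identity $1$, least $0$), compactly generated, $1$ compact, finite products of compact elements compact; $L_\ast$ = compact elements. An $L$-module is a complete lattice $M$ (least $O_M$, greatest $I_M$) with product $aB\in M$ satisfying $(\bigvee a_\alpha)A=\bigvee(a_\alpha A)$, $a(\bigvee A_\alpha)=\bigvee(aA_\alpha)$, $(ab)A=a(bA)$, $1A=A$, $0A=O_M$. $(A:B)=\bigvee\{x\in L:xB\leqslant A\}$ for $A,B\in M$; $\sqrt a=\bigvee\{x\in L_\ast:x^n\leqslant a\text{ for some }n\in\mathbb Z_+\}$. $e\in L$ is principal if $a\wedge be=((a:e)\wedge b)e$ and $(ae\vee b):e=(b:e)\vee a$ for all $a,b$; $L$ is a PG-lattice if every element is a join of principal elements. $N\in M$ is principal if $(b\wedge(B:N))N=bN\wedge B$ and $b\vee(B:N)=((bN\vee B):N)$ for all $b\in L,B\in M$; $M$ is a PG-lattice module if every element is a join of principal elements. $M$ is faithful if $(O_M:I_M)=0$; a multiplication module if every element of $M$ is $aI_M$ for some $a\in L$. Proper means $<I_M$. *)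

theory Defs
  imports Main
begin

definition compact_el :: "'a::complete_lattice \<Rightarrow> bool" where
  "compact_el c \<longleftrightarrow> (\<forall>S. c \<le> Sup S \<longrightarrow> (\<exists>F. finite F \<and> F \<subseteq> S \<and> c \<le> Sup F))"

text \<open>Includes the standing assumptions: compactly generated,
  one compact, products of compact elements compact.\<close>
definition mult_lattice :: "('a::complete_lattice \<Rightarrow> 'a \<Rightarrow> 'a) \<Rightarrow> 'a \<Rightarrow> bool" where
  "mult_lattice mult one \<longleftrightarrow>
     (\<forall>a b. mult a b = mult b a) \<and>
     (\<forall>a b c. mult (mult a b) c = mult a (mult b c)) \<and>
     (\<forall>a S. mult a (Sup S) = Sup ((\<lambda>s. mult a s) ` S)) \<and>
     (\<forall>a. mult one a = a) \<and>
     (\<forall>x::'a. x = Sup {c. compact_el c \<and> c \<le> x}) \<and>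
     compact_el one \<and>
     (\<forall>a b. compact_el a \<longrightarrow> compact_el b \<longrightarrow> compact_el (mult a b))"

definition L_module :: "('a::complete_lattice \<Rightarrow> 'a \<Rightarrow> 'a) \<Rightarrow> 'a \<Rightarrow> ('a \<Rightarrow> 'm::complete_lattice \<Rightarrow> 'm) \<Rightarrow> bool" where
  "L_module mult one act \<longleftrightarrow>
     (\<forall>S A. act (Sup S) A = Sup ((\<lambda>a. act a A) ` S)) \<and>
     (\<forall>a T. act a (Sup T) = Sup (act a ` T)) \<and>
     (\<forall>a b A. act (mult a b) A = act a (act b A)) \<and>
     (\<forall>A. act one A = A) \<and>
     (\<forall>A. act bot A = bot)"

text \<open>Residual (A:B) = join of all x with xB \<le> A (also used in L with act = mult).\<close>
definition res :: "('a::complete_lattice \<Rightarrow> 'm::complete_lattice \<Rightarrow> 'm) \<Rightarrow> 'm \<Rightarrow> 'm \<Rightarrow> 'a" where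
  "res act A B = Sup {x. act x B \<le> A}"

primrec mpow :: "('a \<Rightarrow> 'a \<Rightarrow> 'a) \<Rightarrow> 'a \<Rightarrow> 'a \<Rightarrow> nat \<Rightarrow> 'a" where
  "mpow mult one x 0 = one"
| "mpow mult one x (Suc n) = mult x (mpow mult one x n)"

definition rad :: "('a::complete_lattice \<Rightarrow> 'a \<Rightarrow> 'a) \<Rightarrow> 'a \<Rightarrow> 'a \<Rightarrow> 'a" where
  "rad mult one a = Sup {x. compact_el x \<and> (\<exists>n::nat. n \<ge> 1 \<and> mpow mult one x n \<le> a)}"

definition principal_el :: "('a::complete_lattice \<Rightarrow> 'a \<Rightarrow> 'a) \<Rightarrow> 'a \<Rightarrow> bool" where
  "principal_el mult e \<longleftrightarrow>
     (\<forall>a b. inf a (mult b e) = mult (inf (res mult a e) b) e) \<and>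
     (\<forall>a b. res mult (sup (mult a e) b) e = sup (res mult b e) a)"

definition PG_lattice :: "('a::complete_lattice \<Rightarrow> 'a \<Rightarrow> 'a) \<Rightarrow> bool" where
  "PG_lattice mult \<longleftrightarrow> (\<forall>x. \<exists>S. (\<forall>e\<in>S. principal_el mult e) \<and> x = Sup S)"

definition principal_mod_el :: "('a::complete_lattice \<Rightarrow> 'm::complete_lattice \<Rightarrow> 'm) \<Rightarrow> 'm \<Rightarrow> bool" where
  "principal_mod_el act N \<longleftrightarrow>
     (\<forall>b B. act (inf b (res act B N)) N = inf (act b N) B) \<and>
     (\<forall>b B. sup b (res act B N) = res act (sup (act b N) B) N)"

definition PG_module :: "('a::complete_lattice \<Rightarrow> 'm::complete_lattice \<Rightarrow> 'm) \<Rightarrow> bool" where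
  "PG_module act \<longleftrightarrow> (\<forall>X. \<exists>S. (\<forall>N\<in>S. principal_mod_el act N) \<and> X = Sup S)"

definition faithful :: "('a::complete_lattice \<Rightarrow> 'm::complete_lattice \<Rightarrow> 'm) \<Rightarrow> bool" where
  "faithful act \<longleftrightarrow> res act bot top = bot"

definition multiplication_module :: "('a::complete_lattice \<Rightarrow> 'm::complete_lattice \<Rightarrow> 'm) \<Rightarrow> bool" where
  "multiplication_module act \<longleftrightarrow> (\<forall>A. \<exists>a. A = act a top)"

definition delta1 :: "('a::complete_lattice \<Rightarrow> 'a \<Rightarrow> 'a) \<Rightarrow> 'a \<Rightarrow> ('a \<Rightarrow> 'm::complete_lattice \<Rightarrow> 'm) \<Rightarrow> 'm \<Rightarrow> 'm" where
  "delta1 mult one act A = act (rad mult one (res act A top)) top"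

end

theory Submission
  imports Defs
begin

text \<open>Write \<open>K = k I\<^sub>M\<close>. For compact \<open>x\<close> with \<open>x\<^sup>n K \<le> N\<close> and compact \<open>c \<le> k\<close>,
  commutativity gives \<open>(xc)\<^sup>n I\<^sub>M = x\<^sup>n c\<^sup>n I\<^sub>M \<le> x\<^sup>n K \<le> N\<close>, so \<open>xc \<le> \<surd>(N : I\<^sub>M)\<close>.
  Since \<open>k\<close> is the join of the compact \<open>c \<le> k\<close>, this gives \<open>xK \<le> \<delta>\<^sub>1(N)\<close>, and joining
  over all such \<open>x\<close> yields the claim.\<close>

lemma act_mono_left:
  assumes "L_module mult one act" "a \<le> b"
  shows "act a A \<le> act b A"
proof -
  have "act (Sup {a, b}) A = Sup ((\<lambda>x. act x A) ` {a, b})"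
    using assms(1) unfolding L_module_def by blast
  with assms(2) show ?thesis by (simp add: sup_absorb2) (metis sup.cobounded1)
qed

lemma act_mono_right:
  assumes "L_module mult one act" "A \<le> B"
  shows "act a A \<le> act a B"
proof -
  have "act a (Sup {A, B}) = Sup (act a ` {A, B})"
    using assms(1) unfolding L_module_def by blast
  with assms(2) show ?thesis by (simp add: sup_absorb2) (metis sup.cobounded1)
qed

lemma act_res_le:
  assumes "L_module mult one act"
  shows "act (res act N K) K \<le> N"
proof -
  have "act (res act N K) K = Sup ((\<lambda>y. act y K) ` {x. act x K \<le> N})"
    using assms unfolding L_module_def res_def by blast
  also have "\<dots> \<le> N" by (auto intro: Sup_least)
  finally show ?thesis .
qed

lemma le_res:
  assumes "act x K \<le> N"
  shows "x \<le> res act N K"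
  unfolding res_def using assms by (auto intro: Sup_upper)

lemma mpow_mult_distrib:
  assumes "mult_lattice mult one"
  shows "mpow mult one (mult x y) n = mult (mpow mult one x n) (mpow mult one y n)"
proof (induction n)
  case 0
  then show ?case using assms unfolding mult_lattice_def by simp
next
  case (Suc n)
  have comm: "\<And>a b. mult a b = mult b a" and assoc: "\<And>a b c. mult (mult a b) c = mult a (mult b c)"
    using assms unfolding mult_lattice_def by blast+
  show ?case using Suc.IH by (simp add: assoc) (metis assoc comm)
qed

lemma act_mpow_top_le:
  assumes "L_module mult one act" "n \<ge> 1"
  shows "act (mpow mult one c n) top \<le> act c top"
proof -
  obtain m where "n = Suc m" using assms(2) by (cases n) auto
  moreover have "act (mult c (mpow mult one c m)) top = act c (act (mpow mult one c m) top)"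
    using assms(1) unfolding L_module_def by blast
  ultimately show ?thesis using act_mono_right[OF assms(1), of _ top c] by simp
qed

lemma act_mpow_mult_top_le:
  assumes "mult_lattice mult one" "L_module mult one act" "n \<ge> 1" "c \<le> k"
  shows "act (mpow mult one (mult x c) n) top \<le> act (mpow mult one x n) (act k top)"
proof -
  have "act (mpow mult one (mult x c) n) top
      = act (mpow mult one x n) (act (mpow mult one c n) top)"
    using assms(1,2) unfolding mpow_mult_distrib[OF assms(1)] L_module_def by blast
  also have "\<dots> \<le> act (mpow mult one x n) (act c top)"
    by (rule act_mono_right[OF assms(2) act_mpow_top_le[OF assms(2,3)]])
  also have "\<dots> \<le> act (mpow mult one x n) (act k top)"
    by (rule act_mono_right[OF assms(2) act_mono_left[OF assms(2,4)]])
  finally show ?thesis .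
qed

lemma mult_compact_le_rad_res_top:
  assumes "mult_lattice mult one" "L_module mult one act"
    and "compact_el x" "compact_el c" "c \<le> k"
    and "n \<ge> 1" "mpow mult one x n \<le> res act N (act k top)"
  shows "mult x c \<le> rad mult one (res act N top)"
proof -
  have "act (mpow mult one (mult x c) n) top \<le> act (mpow mult one x n) (act k top)"
    using act_mpow_mult_top_le[OF assms(1,2,6,5)] .
  also have "\<dots> \<le> act (res act N (act k top)) (act k top)"
    using act_mono_left[OF assms(2,7)] .
  also have "\<dots> \<le> N" by (rule act_res_le[OF assms(2)])
  finally have "mpow mult one (mult x c) n \<le> res act N top" by (rule le_res)
  moreover have "compact_el (mult x c)"
    using assms(1,3,4) unfolding mult_lattice_def by blast
  ultimately show ?thesis using assms(6) unfolding rad_def by (auto intro!: Sup_upper)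
qed

lemma act_compact_le_delta1:
  assumes "mult_lattice mult one" "L_module mult one act"
    and "compact_el x" "n \<ge> 1" "mpow mult one x n \<le> res act N (act k top)"
  shows "act x (act k top) \<le> delta1 mult one act N"
proof -
  let ?C = "{c. compact_el c \<and> c \<le> k}"
  have "act x (act k top) = act (mult x k) top"
    using assms(2) unfolding L_module_def by simp
  also have "mult x k = Sup (mult x ` ?C)"
    using assms(1) unfolding mult_lattice_def by metis
  also have "act (Sup (mult x ` ?C)) top = Sup ((\<lambda>a. act a top) ` mult x ` ?C)"
    using assms(2) unfolding L_module_def by blast
  also have "\<dots> \<le> delta1 mult one act N"
    unfolding delta1_def
    by (auto intro!: Sup_least act_mono_left[OF assms(2)]
        mult_compact_le_rad_res_top[OF assms(1,2,3) _ _ assms(4,5)])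
  finally show ?thesis .
qed

lemma act_rad_res_le_delta1:
  assumes "mult_lattice mult one" "L_module mult one act" "multiplication_module act"
  shows "act (rad mult one (res act N K)) K \<le> delta1 mult one act N"
proof -
  obtain k where K: "K = act k top"
    using assms(3) unfolding multiplication_module_def by blast
  have "act (rad mult one (res act N K)) K
      = Sup ((\<lambda>a. act a K) ` {x. compact_el x \<and> (\<exists>n. n \<ge> 1 \<and> mpow mult one x n \<le> res act N K)})"
    using assms(2) unfolding rad_def L_module_def by blast
  also have "\<dots> \<le> delta1 mult one act N"
    by (rule Sup_least) (auto simp only: K intro: act_compact_le_delta1[OF assms(1,2)])
  finally show ?thesis .
qed

theorem theorem3p29:
  fixes mult :: "'a::complete_lattice \<Rightarrow> 'a \<Rightarrow> 'a" and one :: 'a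
    and act :: "'a \<Rightarrow> 'm::complete_lattice \<Rightarrow> 'm"
    and N :: 'm
  assumes "mult_lattice mult one"
    and "PG_lattice mult"
    and "L_module mult one act"
    and "faithful act"
    and "multiplication_module act"
    and "PG_module act"
    and "compact_el (top :: 'm)"
    and "N < top"
  shows "\<forall>K. K < top \<and> \<not> K \<le> N \<longrightarrow>
           act (rad mult one (res act N K)) K \<le> delta1 mult one act N"
  using act_rad_res_le_delta1[OF assms(1,3,5)] by blast

end
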